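(* Let $D$ be an integral domain with quotient field $K$, $T$ an overring of $D$, $\star$ a semistar operation on $D$ and $\star'$ a semistar operation on $T$. The following are equivalent: (i) $T$ is $(\star,\star')$-linked to $D$; (ii) $\mathrm{Na}(D,\star)\subseteq\mathrm{Na}(T,\star')$; (iii) $\tilde\star\le(\widetilde{\star'})_D$, i.e. $E^{\tilde\star}\subseteq (ET)^{\widetilde{\star'}}$ for every $E\in\overline{\mathbf F}(D)$; (iv) $T$ is $(\tilde\star,\widetilde{\star'})$-linked to $D$; (v) $T^{\widetilde{\star'}}$ is an overring of $D^{\tilde\star}$ which is $(\dot{\tilde\star},\dot{\widetilde{\star'}})$-linked to $D^{\tilde\star}$.
   Context: Let $D$ be an integral domain with quotient field $K$. $\overline{\mathbf F}(D)$ denotes the set of all nonzero $D$-submodules of $K$ and $\mathbf f(D)$ the set of nonzero finitely generated $D$-submodules of $K$. A semistar operation on $D$ is a map $\star:\overline{\mathbf F}(D)\to\overline{\mathbf F}(D)$, $E\mapsto E^\star$, such that for all $0\ne x\in K$ and $E,F\in\overline{\mathbf F}(D)$: (1) $(xE)^\star=xE^\star$; (2) $E\subseteq F\Rightarrow E^\star\subseteq F^\star$; (3) $E\subseteq E^\star$ and $(E^\star)^\star=E^\star$. $\star_f$ is defined by $E^{\star_f}=\bigcup\{F^\star:F\in\mathbf f(D),F\subseteq E\}$. A nonzero ideal $I$ of $D$ is a quasi-$\star$-ideal if $I^\star\cap D=I$; a quasi-$\star$-maximal ideal is a maximal element among proper quasi-$\star$-ideals; $\mathcal M(\star_f)$ is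 the set of quasi-$\star_f$-maximal ideals of $D$, and $\tilde\star$ is the semistar operation $E^{\tilde\star}=\bigcap\{ED_Q:Q\in\mathcal M(\star_f)\}$ (equal to $K$ if $\mathcal M(\star_f)=\emptyset$). An overring of $D$ is a ring $T$ with $D\subseteq T\subseteq K$; all notions are defined analogously on $T$. For a semistar operation $\star$ on $D$, $\dot\star$ denotes the semistar operation $E\mapsto E^\star$ on the ring $D^\star$; similarly $\dot{\tilde\star}$ is $E\mapsto E^{\tilde\star}$ on $D^{\tilde\star}$ and $\dot{\widetilde{\star'}}$ is $E\mapsto E^{\widetilde{\star'}}$ on $T^{\widetilde{\star'}}$. $T$ is $(\star,\star')$-linked to $D$ if for every nonzero finitely generated ideal $F\subseteq D$ with $F^\star=D^\star$ one has $(FT)^{\star'}=T^{\star'}$. For $f\in D[X]$, $c(f)$ is its content; $\mathrm{Na}(D,\star):=D[X]_{N_D(\star)}$ with $N_D(\star)=\{h\in D[X]:h\ne0,\ c(h)^\star=D^\star\}$, and $\mathrm{Na}(T,\star')$ is defined analogously. *)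

theory Defs
  imports "HOL-Computational_Algebra.Polynomial" "HOL-Computational_Algebra.Fraction_Field"
begin

text \<open>The quotient field K is the ambient type 'k (a field); rings D, T are subsets of it.\<close>

definition subring :: "'k::field set \<Rightarrow> bool" where
  "subring R \<longleftrightarrow> 0 \<in> R \<and> 1 \<in> R \<and> (\<forall>x\<in>R. \<forall>y\<in>R. x + y \<in> R \<and> x - y \<in> R \<and> x * y \<in> R)"

definition domain_with_qf :: "'k::field set \<Rightarrow> bool" where
  "domain_with_qf D \<longleftrightarrow> subring D \<and>
     (\<forall>x::'k. \<exists>a\<in>D. \<exists>b\<in>D. b \<noteq> 0 \<and> x = a / b)"

definition overring :: "'k::field set \<Rightarrow> 'k set \<Rightarrow> bool" where
  "overring R S \<longleftrightarrow> subring S \<and> R \<subseteq> S"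

definition is_submod :: "'k::field set \<Rightarrow> 'k set \<Rightarrow> bool" where
  "is_submod R E \<longleftrightarrow> 0 \<in> E \<and> (\<forall>x\<in>E. \<forall>y\<in>E. x + y \<in> E) \<and> (\<forall>r\<in>R. \<forall>x\<in>E. r * x \<in> E)"

definition Fbar :: "'k::field set \<Rightarrow> 'k set set" where
  "Fbar R = {E. is_submod R E \<and> E \<noteq> {0}}"

definition gen :: "'k::field set \<Rightarrow> 'k list \<Rightarrow> 'k set" where
  "gen R xs = {(\<Sum>i<length xs. a i * xs ! i) | a. \<forall>i<length xs. a i \<in> R}"

definition fset :: "'k::field set \<Rightarrow> 'k set set" where
  "fset R = {F. (\<exists>xs. F = gen R xs) \<and> F \<noteq> {0}}"

definition smul :: "'k::field \<Rightarrow> 'k set \<Rightarrow> 'k set" where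
  "smul x E = (\<lambda>y. x * y) ` E"

definition modprod :: "'k::field set \<Rightarrow> 'k set \<Rightarrow> 'k set" where
  "modprod E F = {(\<Sum>i<n. e i * f i) | (n::nat) e f. \<forall>i<n. e i \<in> E \<and> f i \<in> F}"

definition semistar :: "'k::field set \<Rightarrow> ('k set \<Rightarrow> 'k set) \<Rightarrow> bool" where
  "semistar R st \<longleftrightarrow>
     (\<forall>E\<in>Fbar R. st E \<in> Fbar R) \<and>
     (\<forall>x E. x \<noteq> 0 \<longrightarrow> E \<in> Fbar R \<longrightarrow> st (smul x E) = smul x (st E)) \<and>
     (\<forall>E\<in>Fbar R. \<forall>F\<in>Fbar R. E \<subseteq> F \<longrightarrow> st E \<subseteq> st F) \<and>
     (\<forall>E\<in>Fbar R. E \<subseteq> st E \<and> st (st E) = st E)"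

definition star_f :: "'k::field set \<Rightarrow> ('k set \<Rightarrow> 'k set) \<Rightarrow> 'k set \<Rightarrow> 'k set" where
  "star_f R st E = \<Union>{st F | F. F \<in> fset R \<and> F \<subseteq> E}"

definition quasi_ideal :: "'k::field set \<Rightarrow> ('k set \<Rightarrow> 'k set) \<Rightarrow> 'k set \<Rightarrow> bool" where
  "quasi_ideal R st I \<longleftrightarrow> I \<subseteq> R \<and> is_submod R I \<and> I \<noteq> {0} \<and> st I \<inter> R = I"

definition quasi_max :: "'k::field set \<Rightarrow> ('k set \<Rightarrow> 'k set) \<Rightarrow> 'k set set" where
  "quasi_max R st = {Q. quasi_ideal R st Q \<and> Q \<noteq> R \<and>
      (\<forall>I. quasi_ideal R st I \<and> I \<noteq> R \<and> Q \<subseteq> I \<longrightarrow> I = Q)}"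

definition loc :: "'k::field set \<Rightarrow> 'k set \<Rightarrow> 'k set" where
  "loc R Q = {a / s | a s. a \<in> R \<and> s \<in> R \<and> s \<notin> Q}"

text \<open>\<open>\<tilde>\<star>\<close>; the intersection over the empty family is all of K.\<close>
definition tilde :: "'k::field set \<Rightarrow> ('k set \<Rightarrow> 'k set) \<Rightarrow> 'k set \<Rightarrow> 'k set" where
  "tilde R st E = (\<Inter>Q\<in>quasi_max R (star_f R st). modprod E (loc R Q))"

definition linked :: "'k::field set \<Rightarrow> 'k set \<Rightarrow> ('k set \<Rightarrow> 'k set) \<Rightarrow> ('k set \<Rightarrow> 'k set) \<Rightarrow> bool" where
  "linked R S a b \<longleftrightarrow>
     (\<forall>F. F \<in> fset R \<and> F \<subseteq> R \<and> a F = a R \<longrightarrow> b (modprod F S) = b S)"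

definition poly_over :: "'k::field set \<Rightarrow> 'k poly \<Rightarrow> bool" where
  "poly_over R f \<longleftrightarrow> (\<forall>i. coeff f i \<in> R)"

definition content :: "'k::field set \<Rightarrow> 'k poly \<Rightarrow> 'k set" where
  "content R h = gen R (coeffs h)"

definition Nset :: "'k::field set \<Rightarrow> ('k set \<Rightarrow> 'k set) \<Rightarrow> 'k poly set" where
  "Nset R st = {h. poly_over R h \<and> h \<noteq> 0 \<and> st (content R h) = st R}"

definition Na :: "'k::field set \<Rightarrow> ('k set \<Rightarrow> 'k set) \<Rightarrow> 'k poly fract set" where
  "Na R st = {Fract f g | f g. poly_over R f \<and> g \<in> Nset R st}"

end

theory Submission
  imports Defs
begin

text \<open>
  Everything is compared through the quasi-\<open>st\<^sub>f\<close>-maximal ideals, which are prime (a Zorn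
  argument produces enough of them). For a finitely generated ideal \<open>F \<subseteq> R\<close> one has
  \<open>st F = st R\<close> iff \<open>F\<close> lies in no quasi-\<open>st\<^sub>f\<close>-maximal ideal \<open>Q\<close> iff \<open>F R\<^sub>Q = R\<^sub>Q\<close> for all
  such \<open>Q\<close>, i.e. iff \<open>tilde F = tilde R\<close>; this gives (i) \<open>\<longleftrightarrow>\<close> (iv) at once.
  (i) \<open>\<longleftrightarrow>\<close> (ii) is the content argument: \<open>st F = st D\<close> says that the polynomial with
  coefficients generating \<open>F\<close> lies in \<open>N\<^sub>D(st)\<close>, and if it divides some \<open>g \<in> N\<^sub>T(st')\<close> in
  \<open>T[X]\<close> then \<open>c(g) \<subseteq> F T\<close>.
  For (i) \<open>\<longrightarrow>\<close> (iii), linkedness forces every quasi-\<open>st'\<^sub>f\<close>-maximal \<open>Q'\<close> of \<open>T\<close> to contract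
  into a quasi-\<open>st\<^sub>f\<close>-maximal \<open>Q\<close> of \<open>D\<close>, whence \<open>D\<^sub>Q \<subseteq> T\<^bsub>Q'\<^esub>\<close>.
  The implications (iii) \<open>\<longrightarrow>\<close> (iv), (iii) \<open>\<longrightarrow>\<close> (v) and (v) \<open>\<longrightarrow>\<close> (iv) only use two facts about
  \<open>tilde\<close>: a submodule \<open>X \<subseteq> tilde R\<close> with \<open>1 \<in> tilde X\<close> has \<open>tilde X = tilde R\<close>, and
  multiplying by a ring between \<open>R\<close> and \<open>tilde R\<close> does not change \<open>tilde\<close>.
\<close>

definition add_closed :: "'k::field set \<Rightarrow> bool" where
  "add_closed M \<longleftrightarrow> 0 \<in> M \<and> (\<forall>x\<in>M. \<forall>y\<in>M. x + y \<in> M)"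

lemma add_closed_sum:
  assumes "add_closed M" "\<And>i. i \<in> A \<Longrightarrow> g i \<in> M"
  shows "sum g A \<in> M"
  using assms(2)
  by (induction A rule: infinite_finite_induct) (use assms(1) in \<open>auto simp: add_closed_def\<close>)

lemma modprod_mem: "e \<in> E \<Longrightarrow> f \<in> F \<Longrightarrow> e * f \<in> modprod E F"
  unfolding modprod_def by (rule CollectI, rule exI[of _ 1]) auto

lemma modprod_zero: "0 \<in> modprod E F"
  unfolding modprod_def by (rule CollectI, rule exI[of _ 0]) simp

lemma modprod_add:
  assumes "x \<in> modprod E F" "y \<in> modprod E F"
  shows "x + y \<in> modprod E F"
proof -
  obtain n :: nat and e f where x: "x = (\<Sum>i<n. e i * f i)" "\<forall>i<n. e i \<in> E \<and> f i \<in> F"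
    using assms(1) unfolding modprod_def by blast
  obtain m :: nat and e' f' where y: "y = (\<Sum>i<m. e' i * f' i)" "\<forall>i<m. e' i \<in> E \<and> f' i \<in> F"
    using assms(2) unfolding modprod_def by blast
  define e'' where "e'' i = (if i < n then e i else e' (i - n))" for i
  define f'' where "f'' i = (if i < n then f i else f' (i - n))" for i
  have "(\<Sum>i<n + m. e'' i * f'' i) = (\<Sum>i<n. e'' i * f'' i) + (\<Sum>i<m. e'' (n + i) * f'' (n + i))"
    by (induction m) (simp_all add: add.assoc)
  also have "\<dots> = x + y"
    unfolding x y e''_def f''_def by simp
  finally have "x + y = (\<Sum>i<n + m. e'' i * f'' i)" ..
  moreover have "\<forall>i<n + m. e'' i \<in> E \<and> f'' i \<in> F"
    using x y unfolding e''_def f''_def by auto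
  ultimately show ?thesis
    unfolding modprod_def by blast
qed

lemma add_closed_modprod: "add_closed (modprod E F)"
  by (simp add: add_closed_def modprod_zero modprod_add)

lemma modprod_least:
  assumes "add_closed M" "\<And>e f. e \<in> E \<Longrightarrow> f \<in> F \<Longrightarrow> e * f \<in> M"
  shows "modprod E F \<subseteq> M"
  using assms by (auto simp: modprod_def intro!: add_closed_sum)

lemma modprod_mono: "E \<subseteq> E' \<Longrightarrow> F \<subseteq> F' \<Longrightarrow> modprod E F \<subseteq> modprod E' F'"
  by (rule modprod_least[OF add_closed_modprod]) (auto intro: modprod_mem)

lemma subset_modprod: "1 \<in> F \<Longrightarrow> E \<subseteq> modprod E F"
  using modprod_mem[of _ E 1 F] by auto

lemma modprod_mult_right:
  assumes "\<And>f. f \<in> F \<Longrightarrow> r * f \<in> F" "x \<in> modprod E F"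
  shows "r * x \<in> modprod E F"
proof -
  have "modprod E F \<subseteq> {x. r * x \<in> modprod E F}"
  proof (rule modprod_least)
    show "add_closed {x. r * x \<in> modprod E F}"
      by (simp add: add_closed_def distrib_left modprod_zero modprod_add)
    fix e f assume "e \<in> E" "f \<in> F"
    then have "e * (r * f) \<in> modprod E F"
      using assms(1) by (blast intro: modprod_mem)
    then show "e * f \<in> {x. r * x \<in> modprod E F}"
      by (simp add: mult.left_commute)
  qed
  then show ?thesis
    using assms(2) by blast
qed

lemma modprod_assoc:
  assumes "1 \<in> S" "\<And>s l. s \<in> S \<Longrightarrow> l \<in> L \<Longrightarrow> s * l \<in> L"
  shows "modprod (modprod E S) L = modprod E L"
proof
  show "modprod (modprod E S) L \<subseteq> modprod E L"
  proof (rule modprod_least[OF add_closed_modprod])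
    fix x l assume x: "x \<in> modprod E S" and l: "l \<in> L"
    have "modprod E S \<subseteq> {x. x * l \<in> modprod E L}"
    proof (rule modprod_least)
      show "add_closed {x. x * l \<in> modprod E L}"
        by (simp add: add_closed_def distrib_right modprod_zero modprod_add)
      fix e s assume "e \<in> E" "s \<in> S"
      then have "e * (s * l) \<in> modprod E L"
        using assms(2) l by (blast intro: modprod_mem)
      then show "e * s \<in> {x. x * l \<in> modprod E L}"
        by (simp add: mult.assoc)
    qed
    then show "x * l \<in> modprod E L"
      using x by blast
  qed
  show "modprod E L \<subseteq> modprod (modprod E S) L"
    using assms(1) by (intro modprod_mono subset_modprod) auto
qed

lemma subring_0: "subring R \<Longrightarrow> 0 \<in> R"
  and subring_1: "subring R \<Longrightarrow> 1 \<in> R"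
  and subring_add: "subring R \<Longrightarrow> x \<in> R \<Longrightarrow> y \<in> R \<Longrightarrow> x + y \<in> R"
  and subring_diff: "subring R \<Longrightarrow> x \<in> R \<Longrightarrow> y \<in> R \<Longrightarrow> x - y \<in> R"
  and subring_mult: "subring R \<Longrightarrow> x \<in> R \<Longrightarrow> y \<in> R \<Longrightarrow> x * y \<in> R"
  by (simp_all add: subring_def)

lemma submod_0: "is_submod R M \<Longrightarrow> 0 \<in> M"
  and submod_add: "is_submod R M \<Longrightarrow> x \<in> M \<Longrightarrow> y \<in> M \<Longrightarrow> x + y \<in> M"
  and submod_mult: "is_submod R M \<Longrightarrow> r \<in> R \<Longrightarrow> x \<in> M \<Longrightarrow> r * x \<in> M"
  by (simp_all add: is_submod_def)

lemma add_closed_submod: "is_submod R M \<Longrightarrow> add_closed M"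
  by (simp add: is_submod_def add_closed_def)

lemma submod_self: "subring R \<Longrightarrow> is_submod R R"
  by (simp add: is_submod_def subring_def)

lemma Fbar_self: "subring R \<Longrightarrow> R \<in> Fbar R"
  using subring_1[of R] by (auto simp: Fbar_def submod_self)

lemma Fbar_nonzero:
  assumes "E \<in> Fbar R"
  obtains y where "y \<in> E" "y \<noteq> 0"
  using assms unfolding Fbar_def is_submod_def by blast

lemma Fbar_restrict_scalars:
  "E \<in> Fbar R' \<Longrightarrow> R \<subseteq> R' \<Longrightarrow> E \<in> Fbar R"
  unfolding Fbar_def is_submod_def by blast

lemma submod_eq_if_one_mem: "is_submod R M \<Longrightarrow> M \<subseteq> R \<Longrightarrow> 1 \<in> M \<Longrightarrow> M = R"
  using submod_mult[of R M _ 1] by auto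

lemma submod_modprod: "subring R \<Longrightarrow> is_submod R (modprod S R)"
  unfolding is_submod_def
  by (auto simp: modprod_zero modprod_add intro: modprod_mult_right subring_mult)

lemma modprod_subset_submod:
  assumes M: "is_submod R M" and "S \<subseteq> M"
  shows "modprod S R \<subseteq> M"
proof (rule modprod_least[OF add_closed_submod[OF M]])
  fix e r assume "e \<in> S" "r \<in> R"
  then have "r * e \<in> M"
    using \<open>S \<subseteq> M\<close> by (blast intro: submod_mult[OF M])
  then show "e * r \<in> M"
    by (simp add: mult.commute)
qed

lemma modprod_subset_subring: "subring L \<Longrightarrow> X \<subseteq> L \<Longrightarrow> modprod X L \<subseteq> L"
  by (rule modprod_subset_submod[OF submod_self])

lemma modprod_eq_subring_if_one_mem:
  assumes L: "subring L" and "X \<subseteq> L" "1 \<in> modprod X L"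
  shows "modprod X L = L"
proof
  show "modprod X L \<subseteq> L"
    using modprod_subset_subring[OF L] assms(2) .
  show "L \<subseteq> modprod X L"
    using modprod_mult_right[OF _ assms(3)] subring_mult[OF L] by fastforce
qed

lemma modprod_subring_absorb: "subring L \<Longrightarrow> 1 \<in> S \<Longrightarrow> S \<subseteq> L \<Longrightarrow> modprod S L = L"
  by (metis modprod_eq_subring_if_one_mem modprod_mem mult_1 subring_1)

lemma modprod_assoc_subring:
  "subring L \<Longrightarrow> 1 \<in> S \<Longrightarrow> S \<subseteq> L \<Longrightarrow> modprod (modprod E S) L = modprod E L"
  by (rule modprod_assoc) (auto simp: subring_def)

lemma gen_memI: "(\<And>i. i < length xs \<Longrightarrow> a i \<in> R) \<Longrightarrow> (\<Sum>i<length xs. a i * xs ! i) \<in> gen R xs"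
  unfolding gen_def by blast

lemma gen_eq_modprod:
  assumes R: "subring R"
  shows "gen R xs = modprod (set xs) R"
proof
  show "gen R xs \<subseteq> modprod (set xs) R"
    unfolding gen_def modprod_def by (force simp: mult.commute)
  show "modprod (set xs) R \<subseteq> gen R xs"
  proof (rule modprod_least)
    show "add_closed (gen R xs)"
      unfolding add_closed_def
    proof (intro conjI ballI)
      show "0 \<in> gen R xs"
        unfolding gen_def using subring_0[OF R] by (auto intro!: exI[of _ "\<lambda>_. 0"])
      fix x y assume "x \<in> gen R xs" "y \<in> gen R xs"
      then obtain a b where "x = (\<Sum>i<length xs. a i * xs ! i)" "\<forall>i<length xs. a i \<in> R"
        "y = (\<Sum>i<length xs. b i * xs ! i)" "\<forall>i<length xs. b i \<in> R"
        unfolding gen_def by blast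
      then show "x + y \<in> gen R xs"
        unfolding gen_def using subring_add[OF R]
        by (auto intro!: exI[of _ "\<lambda>i. a i + b i"] simp: distrib_right sum.distrib)
    qed
    fix x r assume x: "x \<in> set xs" and r: "r \<in> R"
    then obtain k where k: "k < length xs" "x = xs ! k"
      by (metis in_set_conv_nth)
    have "(\<Sum>i<length xs. (if i = k then r else 0) * xs ! i) = (\<Sum>i<length xs. if i = k then r * xs ! k else 0)"
      by (rule sum.cong) auto
    also have "\<dots> = x * r"
      using k by (simp add: mult.commute)
    finally show "x * r \<in> gen R xs"
      using gen_memI[of xs "\<lambda>i. if i = k then r else 0" R] r subring_0[OF R] by simp
  qed
qed

lemma gen_set: "subring R \<Longrightarrow> set xs \<subseteq> gen R xs"
  by (simp add: gen_eq_modprod subset_modprod subring_1)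

lemma submod_gen: "subring R \<Longrightarrow> is_submod R (gen R xs)"
  by (simp add: gen_eq_modprod submod_modprod)

lemma gen_least: "subring R \<Longrightarrow> is_submod R M \<Longrightarrow> set xs \<subseteq> M \<Longrightarrow> gen R xs \<subseteq> M"
  by (simp add: gen_eq_modprod modprod_subset_submod)

lemma gen_mono: "subring R \<Longrightarrow> set xs \<subseteq> set ys \<Longrightarrow> gen R xs \<subseteq> gen R ys"
  by (simp add: gen_eq_modprod modprod_mono)

lemma fset_Fbar: "subring R \<Longrightarrow> F \<in> fset R \<Longrightarrow> F \<in> Fbar R"
  by (auto simp: fset_def Fbar_def submod_gen)

lemma gen_fset: "subring R \<Longrightarrow> x \<in> set xs \<Longrightarrow> x \<noteq> 0 \<Longrightarrow> gen R xs \<in> fset R"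
  using gen_set[of R xs] by (auto simp: fset_def)

lemma smul_gen: "smul b (gen R xs) = gen R (map ((*) b) xs)"
proof -
  have eq: "b * (\<Sum>i<length xs. a i * xs ! i) = (\<Sum>i<length xs. a i * map ((*) b) xs ! i)" for a
    by (simp add: sum_distrib_left algebra_simps)
  show ?thesis
    unfolding smul_def
  proof (intro equalityI subsetI)
    fix y assume "y \<in> (*) b ` gen R xs"
    then obtain a where "y = b * (\<Sum>i<length xs. a i * xs ! i)" "\<forall>i<length xs. a i \<in> R"
      unfolding gen_def by blast
    then show "y \<in> gen R (map ((*) b) xs)"
      using eq gen_memI[of "map ((*) b) xs" a R] by simp
  next
    fix y assume "y \<in> gen R (map ((*) b) xs)"
    then obtain a where "y = (\<Sum>i<length xs. a i * map ((*) b) xs ! i)" "\<forall>i<length xs. a i \<in> R"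
      unfolding gen_def by auto
    then show "y \<in> (*) b ` gen R xs"
      using eq gen_memI[of xs a R] by (metis image_eqI)
  qed
qed

lemma smul_fset:
  assumes R: "subring R" and "b \<noteq> 0" "F \<in> fset R"
  shows "smul b F \<in> fset R"
proof -
  obtain xs where xs: "F = gen R xs"
    using assms(3) unfolding fset_def by blast
  obtain y where "y \<in> F" "y \<noteq> 0"
    using Fbar_nonzero[OF fset_Fbar[OF R assms(3)]] .
  then have "b * y \<in> smul b F" "b * y \<noteq> 0"
    using \<open>b \<noteq> 0\<close> unfolding smul_def by auto
  then show ?thesis
    unfolding fset_def xs smul_gen by blast
qed

lemma modprod_gen_extend:
  assumes "subring D" "subring T" "D \<subseteq> T"
  shows "modprod (gen D xs) T = gen T xs"
  using assms by (simp add: gen_eq_modprod modprod_assoc_subring subring_1)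

lemma fset_modprod_extend:
  assumes D: "subring D" and T: "subring T" and "D \<subseteq> T" and F: "F \<in> fset D"
  shows "modprod F T \<in> fset T"
proof -
  obtain xs where xs: "F = gen D xs" "F \<noteq> {0}"
    using F unfolding fset_def by blast
  have "F \<subseteq> modprod F T"
    by (rule subset_modprod[OF subring_1[OF T]])
  moreover have "0 \<in> F"
    using xs submod_0[OF submod_gen[OF D]] by blast
  ultimately show ?thesis
    using xs modprod_gen_extend[OF D T \<open>D \<subseteq> T\<close>] unfolding fset_def by blast
qed

section \<open>Semistar operations and their finite type\<close>

lemma semistar_Fbar: "semistar R st \<Longrightarrow> E \<in> Fbar R \<Longrightarrow> st E \<in> Fbar R"
  and semistar_extensive: "semistar R st \<Longrightarrow> E \<in> Fbar R \<Longrightarrow> E \<subseteq> st E"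
  and semistar_idem: "semistar R st \<Longrightarrow> E \<in> Fbar R \<Longrightarrow> st (st E) = st E"
  and semistar_mono: "semistar R st \<Longrightarrow> E \<in> Fbar R \<Longrightarrow> F \<in> Fbar R \<Longrightarrow> E \<subseteq> F \<Longrightarrow> st E \<subseteq> st F"
  and semistar_smul: "semistar R st \<Longrightarrow> x \<noteq> 0 \<Longrightarrow> E \<in> Fbar R \<Longrightarrow> st (smul x E) = smul x (st E)"
  by (simp_all add: semistar_def)

lemma submod_semistar: "semistar R st \<Longrightarrow> E \<in> Fbar R \<Longrightarrow> is_submod R (st E)"
  using semistar_Fbar[of R st E] by (simp add: Fbar_def)

lemma one_mem_semistar_self: "subring R \<Longrightarrow> semistar R st \<Longrightarrow> 1 \<in> st R"
  using semistar_extensive[OF _ Fbar_self] subring_1 by blast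

lemma semistar_eq_self_if_one_mem:
  assumes R: "subring R" and st: "semistar R st" and G: "G \<in> Fbar R" "G \<subseteq> R" and "1 \<in> st G"
  shows "st G = st R"
proof
  show "st G \<subseteq> st R"
    by (rule semistar_mono[OF st G(1) Fbar_self[OF R] G(2)])
  have "R \<subseteq> st G"
    using submod_mult[OF submod_semistar[OF st G(1)] _ \<open>1 \<in> st G\<close>] by auto
  then have "st R \<subseteq> st (st G)"
    by (rule semistar_mono[OF st Fbar_self[OF R] semistar_Fbar[OF st G(1)]])
  then show "st R \<subseteq> st G"
    using semistar_idem[OF st G(1)] by simp
qed

lemma star_f_mem_iff: "x \<in> star_f R st E \<longleftrightarrow> (\<exists>F\<in>fset R. F \<subseteq> E \<and> x \<in> st F)"
  unfolding star_f_def by blast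

lemma star_f_fset:
  assumes R: "subring R" and st: "semistar R st" and F: "F \<in> fset R"
  shows "star_f R st F = st F"
  using semistar_mono[OF st fset_Fbar[OF R] fset_Fbar[OF R F]] F
  unfolding star_f_def by blast

lemma star_f_extensive:
  assumes R: "subring R" and st: "semistar R st" and E: "E \<in> Fbar R"
  shows "E \<subseteq> star_f R st E"
proof
  fix x assume "x \<in> E"
  obtain y where y: "y \<in> E" "y \<noteq> 0"
    using Fbar_nonzero[OF E] .
  have "gen R [x, y] \<subseteq> E"
    using \<open>x \<in> E\<close> y(1) E by (intro gen_least[OF R]) (auto simp: Fbar_def)
  moreover have "gen R [x, y] \<in> fset R"
    using gen_fset[OF R _ y(2)] by simp
  moreover have "x \<in> st (gen R [x, y])"
    using semistar_extensive[OF st fset_Fbar[OF R]] gen_set[OF R, of "[x, y]"] calculation(2) by auto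
  ultimately show "x \<in> star_f R st E"
    unfolding star_f_mem_iff by blast
qed

lemma fset_upper_bound:
  assumes R: "subring R" and I: "is_submod R I"
    and F: "F \<in> fset R" "F \<subseteq> I" and F': "F' \<in> fset R" "F' \<subseteq> I"
  obtains G where "G \<in> fset R" "G \<subseteq> I" "F \<subseteq> G" "F' \<subseteq> G"
proof -
  obtain xs ys where xs: "F = gen R xs" and ys: "F' = gen R ys"
    using F(1) F'(1) unfolding fset_def by blast
  have FG: "F \<subseteq> gen R (xs @ ys)" and F'G: "F' \<subseteq> gen R (xs @ ys)"
    using gen_mono[OF R] xs ys by auto
  have "gen R (xs @ ys) \<subseteq> I"
    using gen_set[OF R, of xs] gen_set[OF R, of ys] xs ys F(2) F'(2) by (intro gen_least[OF R I]) auto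
  moreover have "gen R (xs @ ys) \<noteq> {0}"
    using FG F(1) fset_Fbar[OF R] Fbar_nonzero by blast
  ultimately show thesis
    using that FG F'G unfolding fset_def by blast
qed

lemma star_f_finite_bound:
  assumes R: "subring R" and st: "semistar R st" and I: "I \<in> Fbar R"
  shows "set xs \<subseteq> star_f R st I \<Longrightarrow> \<exists>G\<in>fset R. G \<subseteq> I \<and> set xs \<subseteq> st G"
proof (induction xs)
  case Nil
  obtain y where "y \<in> I" "y \<noteq> 0"
    using Fbar_nonzero[OF I] .
  moreover have "is_submod R I"
    using I by (simp add: Fbar_def)
  ultimately have "gen R [y] \<in> fset R" "gen R [y] \<subseteq> I"
    using gen_fset[OF R] gen_least[OF R] by auto
  then show ?case
    by auto
next
  case (Cons x xs)
  then obtain G where G: "G \<in> fset R" "G \<subseteq> I" "set xs \<subseteq> st G"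
    by auto
  have "x \<in> star_f R st I"
    using Cons.prems by simp
  then obtain F where F: "F \<in> fset R" "F \<subseteq> I" "x \<in> st F"
    unfolding star_f_mem_iff by blast
  obtain G' where G': "G' \<in> fset R" "G' \<subseteq> I" "G \<subseteq> G'" "F \<subseteq> G'"
    using fset_upper_bound[OF R _ G(1,2) F(1,2)] I unfolding Fbar_def by blast
  have "st G \<union> st F \<subseteq> st G'"
    using semistar_mono[OF st fset_Fbar[OF R] fset_Fbar[OF R]] G G' F by blast
  then have "set (x # xs) \<subseteq> st G'"
    using G(3) F(3) by auto
  then show ?case
    using G'(1,2) by blast
qed

lemma submod_star_f:
  assumes R: "subring R" and st: "semistar R st" and I: "I \<in> Fbar R"
  shows "is_submod R (star_f R st I)"
  unfolding is_submod_def
proof (intro conjI ballI)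
  show "0 \<in> star_f R st I"
    using star_f_extensive[OF R st I] I unfolding Fbar_def is_submod_def by blast
  fix x y assume "x \<in> star_f R st I" "y \<in> star_f R st I"
  then obtain G where G: "G \<in> fset R" "G \<subseteq> I" "x \<in> st G" "y \<in> st G"
    using star_f_finite_bound[OF R st I, of "[x, y]"] by auto
  then have "x + y \<in> st G"
    using submod_add[OF submod_semistar[OF st fset_Fbar[OF R]]] by blast
  then show "x + y \<in> star_f R st I"
    using G unfolding star_f_mem_iff by blast
next
  fix r x assume r: "r \<in> R" and "x \<in> star_f R st I"
  then obtain F where F: "F \<in> fset R" "F \<subseteq> I" "x \<in> st F"
    unfolding star_f_mem_iff by blast
  then have "r * x \<in> st F"
    using submod_mult[OF submod_semistar[OF st fset_Fbar[OF R]] r] by blast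
  then show "r * x \<in> star_f R st I"
    using F unfolding star_f_mem_iff by blast
qed

lemma semistar_subset_star_f:
  assumes R: "subring R" and st: "semistar R st" and I: "I \<in> Fbar R"
    and G: "G \<in> fset R" "G \<subseteq> star_f R st I"
  shows "st G \<subseteq> star_f R st I"
proof -
  obtain xs where xs: "G = gen R xs"
    using G(1) unfolding fset_def by blast
  obtain G' where G': "G' \<in> fset R" "G' \<subseteq> I" "set xs \<subseteq> st G'"
    using star_f_finite_bound[OF R st I, of xs] gen_set[OF R, of xs] xs G(2) by blast
  have FG': "G' \<in> Fbar R"
    using fset_Fbar[OF R G'(1)] .
  have "G \<subseteq> st G'"
    unfolding xs by (rule gen_least[OF R submod_semistar[OF st FG'] G'(3)])
  then have "st G \<subseteq> st (st G')"
    by (rule semistar_mono[OF st fset_Fbar[OF R G(1)] semistar_Fbar[OF st FG']])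
  also have "\<dots> \<subseteq> star_f R st I"
    using semistar_idem[OF st FG'] G' unfolding star_f_def by blast
  finally show ?thesis .
qed

section \<open>Quasi-maximal ideals\<close>

lemma quasi_ideal_star_f_closure:
  assumes R: "subring R" and st: "semistar R st" and I: "I \<in> Fbar R" "I \<subseteq> R"
  shows "quasi_ideal R (star_f R st) (star_f R st I \<inter> R)"
proof -
  have sub: "is_submod R (star_f R st I \<inter> R)"
    using submod_star_f[OF R st I(1)] submod_self[OF R] by (simp add: is_submod_def)
  have "star_f R st I \<inter> R \<noteq> {0}"
    using star_f_extensive[OF R st I(1)] I Fbar_nonzero by blast
  then have J: "star_f R st I \<inter> R \<in> Fbar R"
    using sub by (simp add: Fbar_def)
  have "star_f R st (star_f R st I \<inter> R) \<subseteq> star_f R st I"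
    using semistar_subset_star_f[OF R st I(1)] unfolding star_f_def by blast
  moreover have "star_f R st I \<inter> R \<subseteq> star_f R st (star_f R st I \<inter> R)"
    by (rule star_f_extensive[OF R st J])
  ultimately show ?thesis
    unfolding quasi_ideal_def using sub J by (auto simp: Fbar_def)
qed

lemma submod_Union_chain:
  assumes C: "C \<noteq> {}" "subset.chain A C" and sub: "\<And>J. J \<in> C \<Longrightarrow> is_submod R J"
  shows "is_submod R (\<Union>C)"
  unfolding is_submod_def
proof (intro conjI ballI)
  show "0 \<in> \<Union>C"
    using C(1) submod_0[OF sub] by blast
  fix x y assume "x \<in> \<Union>C" "y \<in> \<Union>C"
  then obtain J where "J \<in> C" "{x, y} \<subseteq> J"
    using finite_subset_Union_chain[of "{x, y}", OF _ _ C] by blast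
  then show "x + y \<in> \<Union>C"
    using submod_add[OF sub] by blast
next
  fix r x assume "r \<in> R" "x \<in> \<Union>C"
  then show "r * x \<in> \<Union>C"
    using submod_mult[OF sub] by blast
qed

lemma quasi_ideal_Union_chain:
  assumes R: "subring R" and st: "semistar R st" and C: "C \<noteq> {}" "subset.chain A C"
    and qi: "\<And>J. J \<in> C \<Longrightarrow> quasi_ideal R (star_f R st) J \<and> J \<noteq> R"
  shows "quasi_ideal R (star_f R st) (\<Union>C)" "\<Union>C \<noteq> R"
proof -
  have J: "is_submod R J" "J \<subseteq> R" "J \<noteq> {0}" "star_f R st J \<inter> R = J" "1 \<notin> J" if "J \<in> C" for J
    using qi[OF that] submod_eq_if_one_mem unfolding quasi_ideal_def by auto
  have sub: "is_submod R (\<Union>C)"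
    using submod_Union_chain[OF C J(1)] .
  have nz: "\<Union>C \<noteq> {0}"
    using C(1) J(1,3) submod_0 by blast
  have "star_f R st (\<Union>C) \<inter> R \<subseteq> \<Union>C"
  proof
    fix x assume x: "x \<in> star_f R st (\<Union>C) \<inter> R"
    then have "x \<in> star_f R st (\<Union>C)"
      by simp
    then obtain G where G: "G \<in> fset R" "G \<subseteq> \<Union>C" "x \<in> st G"
      unfolding star_f_mem_iff by blast
    obtain xs where xs: "G = gen R xs"
      using G(1) unfolding fset_def by blast
    obtain J' where J': "J' \<in> C" "set xs \<subseteq> J'"
      using finite_subset_Union_chain[of "set xs", OF _ _ C] gen_set[OF R, of xs] xs G(2) by blast
    have "G \<subseteq> J'"
      unfolding xs by (rule gen_least[OF R J(1)[OF J'(1)] J'(2)])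
    then have "x \<in> star_f R st J' \<inter> R"
      using G x unfolding Int_iff star_f_mem_iff by blast
    then show "x \<in> \<Union>C"
      using J(4)[OF J'(1)] J'(1) by blast
  qed
  moreover have "\<Union>C \<subseteq> star_f R st (\<Union>C)"
    using star_f_extensive[OF R st] sub nz by (simp add: Fbar_def)
  moreover have "\<Union>C \<subseteq> R"
    using J(2) by blast
  ultimately show "quasi_ideal R (star_f R st) (\<Union>C)"
    unfolding quasi_ideal_def using sub nz by blast
  show "\<Union>C \<noteq> R"
    using J(5) subring_1[OF R] by blast
qed

lemma quasi_max_above:
  assumes R: "subring R" and st: "semistar R st" and I: "I \<in> Fbar R" "I \<subseteq> R"
    and one: "1 \<notin> star_f R st I"
  obtains Q where "Q \<in> quasi_max R (star_f R st)" "I \<subseteq> Q"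
proof -
  define J0 where "J0 = star_f R st I \<inter> R"
  define A where "A = {J. quasi_ideal R (star_f R st) J \<and> J \<noteq> R \<and> J0 \<subseteq> J}"
  have "J0 \<noteq> R"
    using one subring_1[OF R] unfolding J0_def by blast
  then have "J0 \<in> A"
    unfolding A_def J0_def using quasi_ideal_star_f_closure[OF R st I(1,2)] by blast
  moreover have "\<Union>C \<in> A" if C: "C \<noteq> {}" "subset.chain A C" for C
  proof -
    have CA: "\<And>J. J \<in> C \<Longrightarrow> J \<in> A"
      using C(2) unfolding subset.chain_def by blast
    then have "quasi_ideal R (star_f R st) (\<Union>C)" "\<Union>C \<noteq> R"
      using quasi_ideal_Union_chain[OF R st C] unfolding A_def by blast+
    moreover have "J0 \<subseteq> \<Union>C"
      using C(1) CA unfolding A_def by blast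
    ultimately show ?thesis
      unfolding A_def by blast
  qed
  ultimately obtain M where M: "M \<in> A" "\<And>X. X \<in> A \<Longrightarrow> M \<subseteq> X \<Longrightarrow> X = M"
    using subset_Zorn_nonempty[of A] by blast
  have "M \<in> quasi_max R (star_f R st)"
    using M unfolding quasi_max_def A_def by blast
  moreover have "I \<subseteq> M"
    using M(1) star_f_extensive[OF R st I(1)] I(2) unfolding A_def J0_def by blast
  ultimately show thesis
    using that by blast
qed

definition prime_ideal :: "'k::field set \<Rightarrow> 'k set \<Rightarrow> bool" where
  "prime_ideal R Q \<longleftrightarrow> is_submod R Q \<and> Q \<subseteq> R \<and> 1 \<notin> Q \<and>
     (\<forall>a\<in>R. \<forall>b\<in>R. a * b \<in> Q \<longrightarrow> a \<in> Q \<or> b \<in> Q)"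

lemma quasi_max_one_mem_star_f:
  assumes R: "subring R" and st: "semistar R st" and Q: "Q \<in> quasi_max R (star_f R st)"
    and I: "I \<in> Fbar R" "I \<subseteq> R" "Q \<subseteq> I" "\<not> I \<subseteq> Q"
  shows "1 \<in> star_f R st I"
proof (rule ccontr)
  assume "1 \<notin> star_f R st I"
  then have "star_f R st I \<inter> R \<noteq> R"
    using subring_1[OF R] by blast
  moreover have "quasi_ideal R (star_f R st) (star_f R st I \<inter> R)"
    by (rule quasi_ideal_star_f_closure[OF R st I(1,2)])
  moreover have "Q \<subseteq> star_f R st I \<inter> R"
    using star_f_extensive[OF R st I(1)] I(2,3) by blast
  ultimately have "star_f R st I \<inter> R = Q"
    using Q unfolding quasi_max_def by blast
  then show False
    using star_f_extensive[OF R st I(1)] I(2,4) by blast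
qed

lemma quasi_max_mult_mem:
  assumes R: "subring R" and st: "semistar R st" and Q: "Q \<in> quasi_max R (star_f R st)"
    and a: "a \<in> R" "a \<notin> Q" and b: "b \<in> R" "b \<noteq> 0" and ab: "a * b \<in> Q"
  shows "b \<in> Q"
proof -
  have QR: "Q \<subseteq> R" and Qs: "is_submod R Q" and Qc: "star_f R st Q \<inter> R = Q"
    using Q unfolding quasi_max_def quasi_ideal_def by auto
  txt \<open>By maximality the ideal generated by \<open>Q\<close> and \<open>a\<close> is \<open>st\<^sub>f\<close>-trivial; multiplying a
    witness \<open>G\<close> of this by \<open>b\<close> lands in \<open>Q\<close>, so \<open>b \<in> st (b G) \<subseteq> st\<^sub>f Q\<close>.\<close>
  define I where "I = modprod (insert a Q) R"
  have aQI: "insert a Q \<subseteq> I"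
    unfolding I_def by (rule subset_modprod[OF subring_1[OF R]])
  have "a \<noteq> 0"
    using a(2) submod_0[OF Qs] by auto
  then have "I \<in> Fbar R"
    using submod_modprod[OF R] aQI unfolding I_def Fbar_def by auto
  moreover have "I \<subseteq> R"
    unfolding I_def using a(1) QR by (intro modprod_subset_subring[OF R]) auto
  ultimately obtain G where G: "G \<in> fset R" "G \<subseteq> I" "1 \<in> st G"
    using quasi_max_one_mem_star_f[OF R st Q] aQI a(2) unfolding star_f_mem_iff by blast
  have "I \<subseteq> {x. b * x \<in> Q}"
    unfolding I_def
  proof (rule modprod_least)
    show "add_closed {x. b * x \<in> Q}"
      using submod_0[OF Qs] submod_add[OF Qs] by (simp add: add_closed_def distrib_left)
    fix c r assume "c \<in> insert a Q" "r \<in> R"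
    then have "r * (b * c) \<in> Q"
      using ab submod_mult[OF Qs] b(1) by (auto simp: mult.commute)
    then show "c * r \<in> {x. b * x \<in> Q}"
      by (simp add: ac_simps)
  qed
  then have "smul b G \<subseteq> Q"
    using G(2) unfolding smul_def by blast
  moreover have "b \<in> st (smul b G)"
    using semistar_smul[OF st b(2) fset_Fbar[OF R G(1)]] G(3) unfolding smul_def by force
  ultimately have "b \<in> star_f R st Q"
    using smul_fset[OF R b(2) G(1)] unfolding star_f_mem_iff by blast
  then show "b \<in> Q"
    using Qc b(1) by blast
qed

lemma quasi_max_prime:
  assumes R: "subring R" and st: "semistar R st" and Q: "Q \<in> quasi_max R (star_f R st)"
  shows "prime_ideal R Q"
proof -
  have "Q \<subseteq> R" "is_submod R Q" "Q \<noteq> R"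
    using Q unfolding quasi_max_def quasi_ideal_def by auto
  then show ?thesis
    unfolding prime_ideal_def using quasi_max_mult_mem[OF R st Q] submod_eq_if_one_mem submod_0
    by blast
qed

section \<open>Localization at a prime ideal\<close>

lemma prime_ideal_nonzero: "prime_ideal R Q \<Longrightarrow> s \<notin> Q \<Longrightarrow> s \<noteq> 0"
  unfolding prime_ideal_def using submod_0 by blast

lemma prime_ideal_mult_not_mem:
  "prime_ideal R Q \<Longrightarrow> s \<in> R \<Longrightarrow> t \<in> R \<Longrightarrow> s \<notin> Q \<Longrightarrow> t \<notin> Q \<Longrightarrow> s * t \<notin> Q"
  unfolding prime_ideal_def by blast

lemma locI: "a \<in> R \<Longrightarrow> s \<in> R \<Longrightarrow> s \<notin> Q \<Longrightarrow> a / s \<in> loc R Q"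
  unfolding loc_def by blast

lemma locE:
  assumes "x \<in> loc R Q"
  obtains a s where "a \<in> R" "s \<in> R" "s \<notin> Q" "x = a / s"
  using assms unfolding loc_def by blast

lemma subset_loc: "subring R \<Longrightarrow> prime_ideal R Q \<Longrightarrow> R \<subseteq> loc R Q"
  using locI[of _ R 1 Q] by (force simp: prime_ideal_def subring_1)

lemma subring_loc:
  assumes R: "subring R" and Q: "prime_ideal R Q"
  shows "subring (loc R Q)"
  unfolding subring_def
proof (intro conjI ballI)
  show "0 \<in> loc R Q" "1 \<in> loc R Q"
    using subset_loc[OF R Q] subring_0[OF R] subring_1[OF R] by blast+
  fix x y assume "x \<in> loc R Q" "y \<in> loc R Q"
  then obtain a s b t where x: "x = a / s" and y: "y = b / t"
    and ab: "a \<in> R" "b \<in> R" and st: "s \<in> R" "t \<in> R" "s \<notin> Q" "t \<notin> Q"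
    by (elim locE) blast
  have den: "s * t \<in> R" "s * t \<notin> Q"
    using subring_mult[OF R] prime_ideal_mult_not_mem[OF Q] st by auto
  have "s \<noteq> 0" "t \<noteq> 0"
    using prime_ideal_nonzero[OF Q] st by auto
  then have "x + y = (a * t + b * s) / (s * t)" "x - y = (a * t - b * s) / (s * t)"
    "x * y = (a * b) / (s * t)"
    unfolding x y by (simp_all add: field_simps)
  moreover have "a * t + b * s \<in> R" "a * t - b * s \<in> R" "a * b \<in> R"
    using ab st subring_add[OF R] subring_diff[OF R] subring_mult[OF R] by auto
  ultimately show "x + y \<in> loc R Q" "x - y \<in> loc R Q" "x * y \<in> loc R Q"
    using locI[OF _ den] by auto
qed

lemma modprod_prime_loc_subset:
  assumes R: "subring R" and Q: "prime_ideal R Q"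
  shows "modprod Q (loc R Q) \<subseteq> {q / s | q s. q \<in> Q \<and> s \<in> R \<and> s \<notin> Q}"
proof (rule modprod_least)
  have Qs: "is_submod R Q"
    using Q unfolding prime_ideal_def by blast
  show "add_closed {q / s | q s. q \<in> Q \<and> s \<in> R \<and> s \<notin> Q}"
    unfolding add_closed_def
  proof (intro conjI ballI)
    show "0 \<in> {q / s | q s. q \<in> Q \<and> s \<in> R \<and> s \<notin> Q}"
      using submod_0[OF Qs] subring_1[OF R] Q unfolding prime_ideal_def by force
    fix x y assume "x \<in> {q / s | q s. q \<in> Q \<and> s \<in> R \<and> s \<notin> Q}" "y \<in> {q / s | q s. q \<in> Q \<and> s \<in> R \<and> s \<notin> Q}"
    then obtain a s b t where x: "x = a / s" and y: "y = b / t"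
      and ab: "a \<in> Q" "b \<in> Q" and st: "s \<in> R" "t \<in> R" "s \<notin> Q" "t \<notin> Q"
      by blast
    have "s \<noteq> 0" "t \<noteq> 0"
      using prime_ideal_nonzero[OF Q] st by auto
    then have "x + y = (t * a + s * b) / (s * t)"
      unfolding x y by (simp add: field_simps)
    moreover have "t * a + s * b \<in> Q"
      using ab st submod_add[OF Qs] submod_mult[OF Qs] by auto
    moreover have "s * t \<in> R" "s * t \<notin> Q"
      using subring_mult[OF R] prime_ideal_mult_not_mem[OF Q] st by auto
    ultimately show "x + y \<in> {q / s | q s. q \<in> Q \<and> s \<in> R \<and> s \<notin> Q}"
      by blast
  qed
  fix q l assume "q \<in> Q" "l \<in> loc R Q"
  then obtain a s where "a \<in> R" "s \<in> R" "s \<notin> Q" "q * l = (a * q) / s" "a * q \<in> Q"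
    using submod_mult[OF Qs] by (elim locE) auto
  then show "q * l \<in> {q / s | q s. q \<in> Q \<and> s \<in> R \<and> s \<notin> Q}"
    by blast
qed

lemma one_mem_modprod_loc_iff:
  assumes R: "subring R" and Q: "prime_ideal R Q" and I: "I \<subseteq> R"
  shows "1 \<in> modprod I (loc R Q) \<longleftrightarrow> \<not> I \<subseteq> Q"
proof
  assume "1 \<in> modprod I (loc R Q)"
  moreover have "1 \<notin> {q / s | q s. q \<in> Q \<and> s \<in> R \<and> s \<notin> Q}"
    using prime_ideal_nonzero[OF Q] by (auto simp: eq_divide_eq)
  ultimately show "\<not> I \<subseteq> Q"
    using modprod_prime_loc_subset[OF R Q] modprod_mono[of I Q "loc R Q" "loc R Q"] by blast
next
  assume "\<not> I \<subseteq> Q"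
  then obtain f where f: "f \<in> I" "f \<notin> Q"
    by blast
  then have "1 / f \<in> loc R Q"
    using I subring_1[OF R] by (blast intro: locI)
  moreover have "f * (1 / f) = 1"
    using prime_ideal_nonzero[OF Q f(2)] by simp
  ultimately show "1 \<in> modprod I (loc R Q)"
    using modprod_mem[OF f(1)] by metis
qed

section \<open>The operation \<open>tilde\<close>\<close>

lemma tilde_mem_iff:
  "x \<in> tilde R st E \<longleftrightarrow> (\<forall>Q\<in>quasi_max R (star_f R st). x \<in> modprod E (loc R Q))"
  unfolding tilde_def by blast

lemma tilde_cong:
  "(\<And>Q. Q \<in> quasi_max R (star_f R st) \<Longrightarrow> modprod E (loc R Q) = modprod E' (loc R Q)) \<Longrightarrow>
    tilde R st E = tilde R st E'"
  unfolding tilde_def by simp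

lemma tilde_mono: "E \<subseteq> E' \<Longrightarrow> tilde R st E \<subseteq> tilde R st E'"
  unfolding tilde_def by (intro INF_mono' modprod_mono) auto

lemma tilde_self_eq:
  assumes R: "subring R" and st: "semistar R st"
  shows "tilde R st R = (\<Inter>Q\<in>quasi_max R (star_f R st). loc R Q)"
  unfolding tilde_def
proof (rule INF_cong[OF refl])
  fix Q assume "Q \<in> quasi_max R (star_f R st)"
  note Q = quasi_max_prime[OF R st this]
  show "modprod R (loc R Q) = loc R Q"
    by (rule modprod_subring_absorb[OF subring_loc[OF R Q] subring_1[OF R] subset_loc[OF R Q]])
qed

lemma subset_tilde_self:
  assumes R: "subring R" and st: "semistar R st"
  shows "R \<subseteq> tilde R st R"
  unfolding tilde_self_eq[OF R st] using subset_loc[OF R quasi_max_prime[OF R st]] by blast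

lemma subring_tilde_self:
  assumes R: "subring R" and st: "semistar R st"
  shows "subring (tilde R st R)"
  unfolding tilde_self_eq[OF R st] subring_def
proof (intro conjI ballI INT_I)
  fix Q assume "Q \<in> quasi_max R (star_f R st)"
  note L = subring_loc[OF R quasi_max_prime[OF R st this]]
  show "0 \<in> loc R Q" "1 \<in> loc R Q"
    using subring_0[OF L] subring_1[OF L] .
  fix x y assume "x \<in> (\<Inter>Q\<in>quasi_max R (star_f R st). loc R Q)" "y \<in> (\<Inter>Q\<in>quasi_max R (star_f R st). loc R Q)"
  then have "x \<in> loc R Q" "y \<in> loc R Q"
    using \<open>Q \<in> quasi_max R (star_f R st)\<close> by blast+
  then show "x + y \<in> loc R Q" "x - y \<in> loc R Q" "x * y \<in> loc R Q"
    using subring_add[OF L] subring_diff[OF L] subring_mult[OF L] by blast+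
qed

lemma tilde_modprod_absorb:
  assumes R: "subring R" and st: "semistar R st" and A: "1 \<in> A" "A \<subseteq> tilde R st R"
  shows "tilde R st (modprod E A) = tilde R st E"
proof (rule tilde_cong)
  fix Q assume Q: "Q \<in> quasi_max R (star_f R st)"
  then have "A \<subseteq> loc R Q"
    using A(2) unfolding tilde_self_eq[OF R st] by blast
  then show "modprod (modprod E A) (loc R Q) = modprod E (loc R Q)"
    by (rule modprod_assoc_subring[OF subring_loc[OF R quasi_max_prime[OF R st Q]] A(1)])
qed

lemma tilde_eq_tilde_self_if_one_mem:
  assumes R: "subring R" and st: "semistar R st"
    and X: "X \<subseteq> tilde R st R" "1 \<in> tilde R st X"
  shows "tilde R st X = tilde R st R"
proof (rule tilde_cong)
  fix Q assume Q: "Q \<in> quasi_max R (star_f R st)"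
  note L = subring_loc[OF R quasi_max_prime[OF R st Q]]
  have "X \<subseteq> loc R Q"
    using X(1) Q unfolding tilde_self_eq[OF R st] by blast
  moreover have "1 \<in> modprod X (loc R Q)"
    using X(2) Q unfolding tilde_mem_iff by blast
  ultimately have "modprod X (loc R Q) = loc R Q"
    by (rule modprod_eq_subring_if_one_mem[OF L])
  also have "\<dots> = modprod R (loc R Q)"
    using modprod_subring_absorb[OF L subring_1[OF R] subset_loc[OF R quasi_max_prime[OF R st Q]]] ..
  finally show "modprod X (loc R Q) = modprod R (loc R Q)" .
qed

lemma tilde_eq_tilde_self:
  assumes R: "subring R" and st: "semistar R st" and A: "1 \<in> A" "A \<subseteq> tilde R st R"
  shows "tilde R st A = tilde R st R"
proof (rule tilde_eq_tilde_self_if_one_mem[OF R st A(2)])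
  have "1 * 1 \<in> modprod A (loc R Q)" if "Q \<in> quasi_max R (star_f R st)" for Q
    using A(1) subring_1[OF subring_loc[OF R quasi_max_prime[OF R st that]]] by (rule modprod_mem)
  then show "1 \<in> tilde R st A"
    unfolding tilde_mem_iff by simp
qed

lemma tilde_eq_tilde_self_iff:
  assumes R: "subring R" and st: "semistar R st" and I: "I \<subseteq> R"
  shows "tilde R st I = tilde R st R \<longleftrightarrow> (\<forall>Q\<in>quasi_max R (star_f R st). \<not> I \<subseteq> Q)"
proof -
  have "1 \<in> tilde R st R"
    using subset_tilde_self[OF R st] subring_1[OF R] by blast
  then have "tilde R st I = tilde R st R \<longleftrightarrow> 1 \<in> tilde R st I"
    using tilde_eq_tilde_self_if_one_mem[OF R st] subset_tilde_self[OF R st] I by auto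
  also have "\<dots> \<longleftrightarrow> (\<forall>Q\<in>quasi_max R (star_f R st). \<not> I \<subseteq> Q)"
    unfolding tilde_mem_iff using one_mem_modprod_loc_iff[OF R quasi_max_prime[OF R st] I] by blast
  finally show ?thesis .
qed

lemma semistar_eq_self_iff:
  assumes R: "subring R" and st: "semistar R st" and F: "F \<in> fset R" "F \<subseteq> R"
  shows "st F = st R \<longleftrightarrow> (\<forall>Q\<in>quasi_max R (star_f R st). \<not> F \<subseteq> Q)"
proof
  assume eq: "st F = st R"
  show "\<forall>Q\<in>quasi_max R (star_f R st). \<not> F \<subseteq> Q"
  proof (intro ballI notI)
    fix Q assume Q: "Q \<in> quasi_max R (star_f R st)" "F \<subseteq> Q"
    then have "1 \<in> star_f R st Q"
      using eq one_mem_semistar_self[OF R st] F(1) unfolding star_f_mem_iff by auto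
    moreover have "star_f R st Q \<inter> R = Q" "1 \<notin> Q"
      using Q(1) quasi_max_prime[OF R st Q(1)]
      unfolding quasi_max_def quasi_ideal_def prime_ideal_def by auto
    ultimately show False
      using subring_1[OF R] by blast
  qed
next
  assume none: "\<forall>Q\<in>quasi_max R (star_f R st). \<not> F \<subseteq> Q"
  show "st F = st R"
  proof (rule ccontr)
    assume "st F \<noteq> st R"
    then have "1 \<notin> star_f R st F"
      using semistar_eq_self_if_one_mem[OF R st fset_Fbar[OF R F(1)] F(2)] star_f_fset[OF R st F(1)]
      by auto
    then obtain Q where "Q \<in> quasi_max R (star_f R st)" "F \<subseteq> Q"
      using quasi_max_above[OF R st fset_Fbar[OF R F(1)] F(2)] by blast
    with none show False
      by blast
  qed
qed

lemma semistar_eq_self_iff_tilde_eq_self: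
  assumes "subring R" "semistar R st" "F \<in> fset R" "F \<subseteq> R"
  shows "st F = st R \<longleftrightarrow> tilde R st F = tilde R st R"
  using semistar_eq_self_iff[OF assms] tilde_eq_tilde_self_iff[OF assms(1,2,4)] by simp

lemma linked_iff_linked_tilde:
  assumes D: "subring D" and T: "subring T" and DT: "D \<subseteq> T"
    and st: "semistar D st" and st': "semistar T st'"
  shows "linked D T st st' \<longleftrightarrow> linked D T (tilde D st) (tilde T st')"
  unfolding linked_def
proof (rule all_cong1)
  fix F
  show "(F \<in> fset D \<and> F \<subseteq> D \<and> st F = st D \<longrightarrow> st' (modprod F T) = st' T) \<longleftrightarrow>
      (F \<in> fset D \<and> F \<subseteq> D \<and> tilde D st F = tilde D st D \<longrightarrow>
        tilde T st' (modprod F T) = tilde T st' T)"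
  proof (cases "F \<in> fset D \<and> F \<subseteq> D")
    case True
    then have "modprod F T \<in> fset T" "modprod F T \<subseteq> T"
      using fset_modprod_extend[OF D T DT] modprod_subset_subring[OF T] DT by auto
    then show ?thesis
      using semistar_eq_self_iff_tilde_eq_self[OF D st] semistar_eq_self_iff_tilde_eq_self[OF T st']
        True by simp
  qed blast
qed

section \<open>Contents of polynomials and Nagata rings\<close>

lemma coeff_mem_content:
  assumes R: "subring R"
  shows "coeff h i \<in> content R h"
proof (cases "coeff h i = 0")
  case True
  then show ?thesis
    using submod_0[OF submod_gen[OF R]] unfolding content_def by simp
next
  case False
  then have "h \<noteq> 0" "i \<le> degree h"
    by (auto intro: le_degree)
  then have "coeff h i \<in> set (coeffs h)"
    by (rule coeff_in_coeffs)
  then show ?thesis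
    using gen_set[OF R] unfolding content_def by blast
qed

lemma set_coeffs_subset: "set (coeffs h) \<subseteq> range (coeff h)"
  by (auto simp: coeffs_def)

lemma content_subset:
  assumes R: "subring R" and "poly_over R h"
  shows "content R h \<subseteq> R"
  unfolding content_def
proof (rule gen_least[OF R submod_self[OF R]])
  show "set (coeffs h) \<subseteq> R"
    using set_coeffs_subset \<open>poly_over R h\<close> unfolding poly_over_def by blast
qed

lemma content_fset:
  assumes R: "subring R" and "h \<noteq> 0"
  shows "content R h \<in> fset R"
  unfolding content_def
proof (rule gen_fset[OF R])
  show "lead_coeff h \<in> set (coeffs h)"
    using coeff_in_coeffs[OF \<open>h \<noteq> 0\<close> order_refl] .
  show "lead_coeff h \<noteq> 0"
    using \<open>h \<noteq> 0\<close> by simp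
qed

lemma content_Poly:
  assumes R: "subring R"
  shows "content R (Poly xs) = gen R xs"
proof
  have "set (coeffs (Poly xs)) \<subseteq> set xs"
    by (auto simp: strip_while_def dest: set_dropWhileD)
  then show "content R (Poly xs) \<subseteq> gen R xs"
    unfolding content_def by (rule gen_mono[OF R])
  have "set xs \<subseteq> content R (Poly xs)"
  proof
    fix x assume "x \<in> set xs"
    then obtain i where "i < length xs" "x = xs ! i"
      by (auto simp: in_set_conv_nth)
    then have "x = coeff (Poly xs) i"
      by (simp add: nth_default_def)
    then show "x \<in> content R (Poly xs)"
      using coeff_mem_content[OF R, of "Poly xs" i] by simp
  qed
  moreover have "is_submod R (content R (Poly xs))"
    unfolding content_def by (rule submod_gen[OF R])
  ultimately show "gen R xs \<subseteq> content R (Poly xs)"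
    by (intro gen_least[OF R])
qed

lemma content_mult_subset:
  assumes T: "subring T" and f: "poly_over T f" and h: "\<And>i. coeff h i \<in> F"
  shows "content T (f * h) \<subseteq> modprod F T"
  unfolding content_def
proof (rule gen_least[OF T submod_modprod[OF T]])
  have "coeff (f * h) n \<in> modprod F T" for n
    unfolding coeff_mult using f h
    by (intro add_closed_sum[OF add_closed_modprod]) (metis modprod_mem mult.commute poly_over_def)
  then show "set (coeffs (f * h)) \<subseteq> modprod F T"
    using set_coeffs_subset by blast
qed

lemma linked_imp_Na_subset:
  assumes D: "subring D" and T: "subring T" and DT: "D \<subseteq> T" and lk: "linked D T st st'"
  shows "Na D st \<subseteq> Na T st'"
proof
  fix x assume "x \<in> Na D st"
  then obtain f g where x: "x = Fract f g" and f: "poly_over D f" and g: "g \<in> Nset D st"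
    unfolding Na_def by blast
  then have "poly_over D g" "g \<noteq> 0" "st (content D g) = st D"
    unfolding Nset_def by auto
  then have "st' (modprod (content D g) T) = st' T"
    using lk content_fset[OF D] content_subset[OF D] unfolding linked_def by blast
  moreover have "modprod (content D g) T = content T g"
    unfolding content_def by (rule modprod_gen_extend[OF D T DT])
  ultimately have "g \<in> Nset T st'"
    using g DT unfolding Nset_def poly_over_def by auto
  moreover have "poly_over T f"
    using f DT unfolding poly_over_def by auto
  ultimately show "x \<in> Na T st'"
    unfolding Na_def x by blast
qed

lemma Na_subset_imp_linked:
  assumes D: "subring D" and T: "subring T" and DT: "D \<subseteq> T" and st': "semistar T st'"
    and Na: "Na D st \<subseteq> Na T st'"
  shows "linked D T st st'"
  unfolding linked_def
proof (intro allI impI, elim conjE)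
  fix F assume F: "F \<in> fset D" "F \<subseteq> D" "st F = st D"
  then obtain xs where xs: "F = gen D xs"
    unfolding fset_def by blast
  define h where "h = Poly xs"
  have content_h: "content D h = F"
    unfolding h_def xs by (rule content_Poly[OF D])
  then have "h \<noteq> 0"
    using F(1) submod_gen[OF D] unfolding fset_def content_def by (auto simp: gen_def)
  moreover have "poly_over D h"
    using coeff_mem_content[OF D, of h] F(2) unfolding content_h poly_over_def by blast
  ultimately have "h \<in> Nset D st"
    using F(3) content_h unfolding Nset_def by simp
  moreover have "poly_over D 1"
    using subring_0[OF D] subring_1[OF D] by (simp add: poly_over_def coeff_1)
  ultimately have "Fract 1 h \<in> Na T st'"
    using Na unfolding Na_def by blast
  then obtain f g where fg: "Fract 1 h = Fract f g" and f: "poly_over T f" and g: "g \<in> Nset T st'"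
    unfolding Na_def by blast
  then have g: "g \<noteq> 0" "st' (content T g) = st' T"
    unfolding Nset_def by auto
  have "g = f * h"
    using fg eq_fract(1)[OF \<open>h \<noteq> 0\<close> g(1)] by simp
  then have "content T g \<subseteq> modprod F T"
    using content_mult_subset[OF T f, of h F] coeff_mem_content[OF D, of h] content_h by blast
  moreover have FT: "modprod F T \<in> Fbar T" "modprod F T \<subseteq> T"
    using fset_Fbar[OF T fset_modprod_extend[OF D T DT F(1)]] modprod_subset_subring[OF T] F(2) DT
    by auto
  ultimately have "st' T \<subseteq> st' (modprod F T)"
    using semistar_mono[OF st' fset_Fbar[OF T content_fset[OF T g(1)]] FT(1)] g(2) by simp
  moreover have "st' (modprod F T) \<subseteq> st' T"
    by (rule semistar_mono[OF st' FT(1) Fbar_self[OF T] FT(2)])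
  ultimately show "st' (modprod F T) = st' T"
    by blast
qed

lemma linked_iff_Na_subset:
  assumes "subring D" "subring T" "D \<subseteq> T" "semistar T st'"
  shows "linked D T st st' \<longleftrightarrow> Na D st \<subseteq> Na T st'"
  using linked_imp_Na_subset[OF assms(1-3)] Na_subset_imp_linked[OF assms] by blast

section \<open>Comparing \<open>tilde\<close> on D and on T\<close>

lemma loc_mono:
  assumes DT: "D \<subseteq> T" and "Q' \<inter> D \<subseteq> Q"
  shows "loc D Q \<subseteq> loc T Q'"
  using assms unfolding loc_def by blast

lemma Fbar_contraction:
  assumes dq: "domain_with_qf D" and DT: "D \<subseteq> T" and E: "E \<in> Fbar T"
  shows "E \<inter> D \<in> Fbar D"
proof -
  have D: "subring D"
    using dq by (simp add: domain_with_qf_def)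
  have Es: "is_submod T E"
    using E by (simp add: Fbar_def)
  obtain q where q: "q \<in> E" "q \<noteq> 0"
    using Fbar_nonzero[OF E] .
  obtain a b where ab: "a \<in> D" "b \<in> D" "b \<noteq> 0" "q = a / b"
    using dq unfolding domain_with_qf_def by blast
  then have "a = b * q" "a \<noteq> 0"
    using q(2) by auto
  then have "a \<in> E \<inter> D" "a \<noteq> 0"
    using submod_mult[OF Es _ q(1)] ab(1,2) DT by auto
  moreover have "is_submod D (E \<inter> D)"
    using Es submod_self[OF D] DT unfolding is_submod_def by blast
  ultimately show ?thesis
    unfolding Fbar_def by blast
qed

lemma linked_quasi_max_below:
  assumes dq: "domain_with_qf D" and T: "subring T" and DT: "D \<subseteq> T"
    and st: "semistar D st" and st': "semistar T st'" and lk: "linked D T st st'"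
    and Q': "Q' \<in> quasi_max T (star_f T st')"
  obtains Q where "Q \<in> quasi_max D (star_f D st)" "Q' \<inter> D \<subseteq> Q"
proof -
  have D: "subring D"
    using dq by (simp add: domain_with_qf_def)
  have Q's: "is_submod T Q'" and "Q' \<noteq> {0}"
    using Q' unfolding quasi_max_def quasi_ideal_def by auto
  then have P: "Q' \<inter> D \<in> Fbar D"
    using Fbar_contraction[OF dq DT] unfolding Fbar_def by blast
  have "1 \<notin> star_f D st (Q' \<inter> D)"
  proof
    txt \<open>An \<open>st\<close>-trivial \<open>G \<subseteq> Q' \<inter> D\<close> would give the \<open>st'\<close>-trivial \<open>G T \<subseteq> Q'\<close>.\<close>
    assume "1 \<in> star_f D st (Q' \<inter> D)"
    then obtain G where G: "G \<in> fset D" "G \<subseteq> Q' \<inter> D" "1 \<in> st G"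
      unfolding star_f_mem_iff by blast
    then have "st G = st D"
      using semistar_eq_self_if_one_mem[OF D st fset_Fbar[OF D G(1)]] by blast
    then have "st' (modprod G T) = st' T"
      using lk G unfolding linked_def by blast
    moreover have GT: "modprod G T \<in> fset T" "modprod G T \<subseteq> T"
      using fset_modprod_extend[OF D T DT G(1)] modprod_subset_subring[OF T] G(2) DT by auto
    ultimately have "\<not> modprod G T \<subseteq> Q'"
      using semistar_eq_self_iff[OF T st' GT] Q' by blast
    moreover have "modprod G T \<subseteq> Q'"
      using modprod_subset_submod[OF Q's] G(2) by blast
    ultimately show False
      by blast
  qed
  then show thesis
    using quasi_max_above[OF D st P] that by blast
qed

lemma linked_imp_tilde_le:
  assumes dq: "domain_with_qf D" and T: "subring T" and DT: "D \<subseteq> T"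
    and st: "semistar D st" and st': "semistar T st'" and lk: "linked D T st st'"
  shows "tilde D st E \<subseteq> tilde T st' (modprod E T)"
proof
  fix x assume x: "x \<in> tilde D st E"
  show "x \<in> tilde T st' (modprod E T)"
    unfolding tilde_mem_iff
  proof
    fix Q' assume Q': "Q' \<in> quasi_max T (star_f T st')"
    note L' = quasi_max_prime[OF T st' Q']
    obtain Q where "Q \<in> quasi_max D (star_f D st)" "Q' \<inter> D \<subseteq> Q"
      using linked_quasi_max_below[OF assms Q'] .
    then have "x \<in> modprod E (loc T Q')"
      using x modprod_mono[OF order_refl loc_mono[OF DT]] unfolding tilde_mem_iff by blast
    then show "x \<in> modprod (modprod E T) (loc T Q')"
      using modprod_assoc_subring[OF subring_loc[OF T L'] subring_1[OF T] subset_loc[OF T L']] by simp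
  qed
qed

lemma tilde_le_imp_linked_tilde:
  assumes D: "subring D" and T: "subring T" and DT: "D \<subseteq> T"
    and st: "semistar D st" and st': "semistar T st'"
    and le: "\<And>E. E \<in> Fbar D \<Longrightarrow> tilde D st E \<subseteq> tilde T st' (modprod E T)"
  shows "linked D T (tilde D st) (tilde T st')"
  unfolding linked_def
proof (intro allI impI, elim conjE)
  fix F assume F: "F \<in> fset D" "F \<subseteq> D" "tilde D st F = tilde D st D"
  have "1 \<in> tilde D st F"
    using subset_tilde_self[OF D st] subring_1[OF D] F(3) by blast
  then have "1 \<in> tilde T st' (modprod F T)"
    using le fset_Fbar[OF D F(1)] by blast
  moreover have "modprod F T \<subseteq> tilde T st' T"
    using modprod_subset_subring[OF T] subset_tilde_self[OF T st'] F(2) DT by blast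
  ultimately show "tilde T st' (modprod F T) = tilde T st' T"
    using tilde_eq_tilde_self_if_one_mem[OF T st'] by blast
qed

lemma tilde_le_imp_linked_tilde_self:
  assumes D: "subring D" and T: "subring T" and DT: "D \<subseteq> T"
    and st: "semistar D st" and st': "semistar T st'"
    and le: "\<And>E. E \<in> Fbar D \<Longrightarrow> tilde D st E \<subseteq> tilde T st' (modprod E T)"
  shows "overring (tilde D st D) (tilde T st' T)"
    and "linked (tilde D st D) (tilde T st' T) (tilde D st) (tilde T st')"
proof -
  let ?R = "tilde D st D" and ?S = "tilde T st' T"
  have DR: "D \<subseteq> ?R" and TS: "T \<subseteq> ?S"
    using subset_tilde_self D T st st' by blast+
  have "?R \<subseteq> tilde T st' (modprod D T)"
    using le Fbar_self[OF D] by blast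
  then have RS: "?R \<subseteq> ?S"
    using modprod_subring_absorb[OF T subring_1[OF D] DT] by simp
  then show "overring ?R ?S"
    unfolding overring_def using subring_tilde_self[OF T st'] by blast
  show "linked ?R ?S (tilde D st) (tilde T st')"
    unfolding linked_def
  proof (intro allI impI, elim conjE)
    fix F assume F: "F \<in> fset ?R" "F \<subseteq> ?R" "tilde D st F = tilde D st ?R"
    have "F \<in> Fbar D"
      using fset_Fbar[OF subring_tilde_self[OF D st] F(1)] DR by (rule Fbar_restrict_scalars)
    moreover have "1 \<in> tilde D st F"
      using F(3) tilde_eq_tilde_self[OF D st subring_1[OF subring_tilde_self[OF D st]] order_refl]
        subset_tilde_self[OF D st] subring_1[OF D] by blast
    ultimately have "1 \<in> tilde T st' (modprod F T)"
      using le by blast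
    then have one: "1 \<in> tilde T st' (modprod F ?S)"
      using tilde_mono[OF modprod_mono[OF order_refl TS]] by blast
    have "modprod F ?S \<subseteq> ?S"
      using modprod_subset_subring[OF subring_tilde_self[OF T st']] F(2) RS by blast
    then have "tilde T st' (modprod F ?S) = tilde T st' T"
      using one by (rule tilde_eq_tilde_self_if_one_mem[OF T st'])
    also have "\<dots> = tilde T st' ?S"
      using tilde_eq_tilde_self[OF T st' subring_1[OF subring_tilde_self[OF T st']] order_refl] ..
    finally show "tilde T st' (modprod F ?S) = tilde T st' ?S" .
  qed
qed

lemma linked_tilde_self_imp_linked_tilde:
  assumes D: "subring D" and T: "subring T" and DT: "D \<subseteq> T"
    and st: "semistar D st" and st': "semistar T st'"
    and RS: "tilde D st D \<subseteq> tilde T st' T"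
    and lk: "linked (tilde D st D) (tilde T st' T) (tilde D st) (tilde T st')"
  shows "linked D T (tilde D st) (tilde T st')"
  unfolding linked_def
proof (intro allI impI, elim conjE)
  let ?R = "tilde D st D" and ?S = "tilde T st' T"
  fix F assume F: "F \<in> fset D" "F \<subseteq> D" "tilde D st F = tilde D st D"
  have R: "subring ?R" "1 \<in> ?R" "D \<subseteq> ?R"
    using subring_tilde_self[OF D st] subring_1 subset_tilde_self[OF D st] by blast+
  have S: "subring ?S" "1 \<in> ?S" "T \<subseteq> ?S"
    using subring_tilde_self[OF T st'] subring_1 subset_tilde_self[OF T st'] by blast+
  have "tilde D st (modprod F ?R) = tilde D st F"
    by (rule tilde_modprod_absorb[OF D st R(2) order_refl])
  also have "\<dots> = tilde D st ?R"
    using F(3) tilde_eq_tilde_self[OF D st R(2) order_refl] by simp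
  finally have "tilde T st' (modprod (modprod F ?R) ?S) = tilde T st' ?S"
    using lk fset_modprod_extend[OF D R(1,3) F(1)] modprod_subset_subring[OF R(1)] F(2) R(3)
    unfolding linked_def by blast
  moreover have "modprod (modprod F ?R) ?S = modprod F ?S"
    by (rule modprod_assoc_subring[OF S(1) R(2) RS])
  moreover have "tilde T st' (modprod F ?S) = tilde T st' (modprod F T)"
    using tilde_modprod_absorb[OF T st' S(2) order_refl]
      tilde_modprod_absorb[OF T st' subring_1[OF T] S(3)] by simp
  moreover have "tilde T st' ?S = tilde T st' T"
    by (rule tilde_eq_tilde_self[OF T st' S(2) order_refl])
  ultimately show "tilde T st' (modprod F T) = tilde T st' T"
    by simp
qed

theorem theorem3p8:
  fixes D T :: "'k::field set" and st st' :: "'k set \<Rightarrow> 'k set"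
  assumes "domain_with_qf D" and "overring D T"
    and "semistar D st" and "semistar T st'"
  shows "(linked D T st st' \<longleftrightarrow> Na D st \<subseteq> Na T st')
    \<and> (Na D st \<subseteq> Na T st' \<longleftrightarrow> (\<forall>E\<in>Fbar D. tilde D st E \<subseteq> tilde T st' (modprod E T)))
    \<and> ((\<forall>E\<in>Fbar D. tilde D st E \<subseteq> tilde T st' (modprod E T)) \<longleftrightarrow> linked D T (tilde D st) (tilde T st'))
    \<and> (linked D T (tilde D st) (tilde T st') \<longleftrightarrow>
        (overring (tilde D st D) (tilde T st' T) \<and>
         linked (tilde D st D) (tilde T st' T) (tilde D st) (tilde T st')))"
proof -
  have D: "subring D"
    using assms(1) by (simp add: domain_with_qf_def)
  have T: "subring T" and DT: "D \<subseteq> T"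
    using assms(2) by (auto simp: overring_def)
  note rings = D T DT assms(3,4)
  have i_ii: "linked D T st st' \<longleftrightarrow> Na D st \<subseteq> Na T st'"
    by (rule linked_iff_Na_subset[OF D T DT assms(4)])
  have i_iv: "linked D T st st' \<longleftrightarrow> linked D T (tilde D st) (tilde T st')"
    by (rule linked_iff_linked_tilde[OF rings])
  have i_iii: "linked D T st st' \<Longrightarrow> \<forall>E\<in>Fbar D. tilde D st E \<subseteq> tilde T st' (modprod E T)"
    using linked_imp_tilde_le[OF assms(1) T DT assms(3,4)] by blast
  have iii_iv_v: "linked D T (tilde D st) (tilde T st')"
    "overring (tilde D st D) (tilde T st' T)"
    "linked (tilde D st D) (tilde T st' T) (tilde D st) (tilde T st')"
    if "\<forall>E\<in>Fbar D. tilde D st E \<subseteq> tilde T st' (modprod E T)"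
    using tilde_le_imp_linked_tilde[OF rings] tilde_le_imp_linked_tilde_self[OF rings] that by blast+
  have v_iv: "linked D T (tilde D st) (tilde T st')"
    if "overring (tilde D st D) (tilde T st' T)"
      "linked (tilde D st D) (tilde T st' T) (tilde D st) (tilde T st')"
    using linked_tilde_self_imp_linked_tilde[OF rings] that unfolding overring_def by blast
  show ?thesis
    using i_ii i_iv i_iii iii_iv_v v_iv by blast
qed

end
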